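(* Let $S$ be any set with $\bot \notin S$, and let $\mathcal{P}_\star(S) = \{ X \subseteq S \cup \{\bot\} \mid X \text{ infinite} \Rightarrow \bot \in X \}$. Define a relation $\sqsubseteq$ on $\mathcal{P}_\star(S)$ by $$X \sqsubseteq Y \iff X = Y \ \lor\ \big(\bot \in X \land (Y = \emptyset \lor X \setminus \{\bot\} \subseteq Y)\big).$$ Then $(\mathcal{P}_\star(S), \sqsubseteq)$ is an $\omega$-complete partial order with a least element (i.e., $\sqsubseteq$ is a partial order, there is a least element, and every increasing sequence $X_0 \sqsubseteq X_1 \sqsubseteq X_2 \sqsubseteq \cdots$ has a supremum).
   Context: $\bot$ is a fresh symbol representing non-termination. An element $X \in \mathcal{P}_\star(S)$ represents the set of outcomes of a nondeterministic computation: $X=\emptyset$ is the error value, $\bot\in X$ means some branch diverges, and the other elements of $X$ are returned values. *)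

theory Defs
  imports Main
begin

text \<open>The bottom symbol bt (representing non-termination) is an explicit element of the ambient type, assumed not in S.\<close>

definition Pstar :: "'a \<Rightarrow> 'a set \<Rightarrow> 'a set set" where
  "Pstar bt S = {X. X \<subseteq> S \<union> {bt} \<and> (infinite X \<longrightarrow> bt \<in> X)}"

definition le_star :: "'a \<Rightarrow> 'a set \<Rightarrow> 'a set \<Rightarrow> bool" where
  "le_star bt X Y \<longleftrightarrow> X = Y \<or> (bt \<in> X \<and> (Y = {} \<or> X - {bt} \<subseteq> Y))"

definition le_star_rel :: "'a \<Rightarrow> 'a set \<Rightarrow> ('a set \<times> 'a set) set" where
  "le_star_rel bt S = {(X, Y). X \<in> Pstar bt S \<and> Y \<in> Pstar bt S \<and> le_star bt X Y}"

end

theory Submission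
  imports Defs
begin

text \<open>The least element is \<open>{\<bottom>}\<close>. A set omitting \<open>\<bottom>\<close> lies below nothing but itself, so an
  increasing sequence either reaches such a set and stays there, or consists of sets containing
  \<open>\<bottom>\<close>; in the latter case their union is the supremum, because any upper bound is empty or
  contains every \<open>C n - {\<bottom>}\<close>. None of this uses \<open>\<bottom> \<notin> S\<close>.\<close>

lemma le_star_refl: "le_star bt X X"
  unfolding le_star_def by blast

lemma le_star_trans: "le_star bt X Y \<Longrightarrow> le_star bt Y Z \<Longrightarrow> le_star bt X Z"
  unfolding le_star_def by blast

lemma le_star_antisym: "le_star bt X Y \<Longrightarrow> le_star bt Y X \<Longrightarrow> X = Y"
  unfolding le_star_def by blast

lemma partial_order_on_le_star_rel: "partial_order_on (Pstar bt S) (le_star_rel bt S)"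
proof -
  have "preorder_on (Pstar bt S) (le_star_rel bt S)"
    unfolding preorder_on_def refl_on_def trans_on_def le_star_rel_def
    using le_star_refl le_star_trans by fast
  moreover have "antisym (le_star_rel bt S)"
    unfolding antisym_on_def le_star_rel_def using le_star_antisym by fast
  ultimately show ?thesis
    unfolding partial_order_on_def by blast
qed

lemma singleton_bot_in_Pstar: "{bt} \<in> Pstar bt S"
  unfolding Pstar_def by simp

lemma le_star_singleton_bot: "le_star bt {bt} X"
  unfolding le_star_def by simp

lemma le_star_bot_free_eq:
  assumes "bt \<notin> X" and "le_star bt X Y"
  shows "Y = X"
  using assms unfolding le_star_def by blast

lemma le_star_chain_mono:
  assumes "\<And>n. le_star bt (C n) (C (Suc n))" and "m \<le> n"
  shows "le_star bt (C m) (C n)"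
  using \<open>m \<le> n\<close>
  by (rule transitive_stepwise_le[where R = "\<lambda>m n. le_star bt (C m) (C n)"])
    (fact le_star_refl, erule (1) le_star_trans, fact assms(1))

definition le_star_lub :: "'a \<Rightarrow> (nat \<Rightarrow> 'a set) \<Rightarrow> 'a set \<Rightarrow> bool" where
  "le_star_lub bt C U \<longleftrightarrow>
     (\<forall>n. le_star bt (C n) U) \<and> (\<forall>V. (\<forall>n. le_star bt (C n) V) \<longrightarrow> le_star bt U V)"

lemma le_star_lub_bot_free:
  assumes chain: "\<And>n. le_star bt (C n) (C (Suc n))" and "bt \<notin> C n"
  shows "le_star_lub bt C (C n)"
  unfolding le_star_lub_def
proof (intro conjI allI impI)
  fix m
  show "le_star bt (C m) (C n)"
  proof (cases "m \<le> n")
    case True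
    then show ?thesis by (rule le_star_chain_mono[of bt C, OF chain])
  next
    case False
    then have "le_star bt (C n) (C m)" by (intro le_star_chain_mono[of bt C, OF chain]) simp
    with \<open>bt \<notin> C n\<close> have "C m = C n" by (rule le_star_bot_free_eq)
    then show ?thesis by (simp add: le_star_refl)
  qed
qed blast

lemma le_star_lub_Union:
  assumes "\<And>n. bt \<in> C n"
  shows "le_star_lub bt C (\<Union>n. C n)"
  unfolding le_star_lub_def
proof (intro conjI allI impI)
  fix n
  show "le_star bt (C n) (\<Union>n. C n)"
    using assms unfolding le_star_def by blast
next
  fix V
  assume "\<forall>n. le_star bt (C n) V"
  then have "V = {} \<or> (\<forall>n. C n - {bt} \<subseteq> V)"
    unfolding le_star_def by blast
  then show "le_star bt (\<Union>n. C n) V"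
    using assms unfolding le_star_def by blast
qed

lemma le_star_chain_has_lub:
  assumes "\<And>n. C n \<in> Pstar bt S" and chain: "\<And>n. le_star bt (C n) (C (Suc n))"
  shows "\<exists>U\<in>Pstar bt S. le_star_lub bt C U"
proof (cases "\<exists>n. bt \<notin> C n")
  case True
  then obtain n where "bt \<notin> C n" by blast
  then show ?thesis using assms(1) le_star_lub_bot_free[of bt C, OF chain] by blast
next
  case False
  then have bt: "\<And>n. bt \<in> C n" by blast
  have "(\<Union>n. C n) \<in> Pstar bt S"
    using assms(1) bt unfolding Pstar_def by blast
  moreover have "le_star_lub bt C (\<Union>n. C n)"
    using bt by (rule le_star_lub_Union)
  ultimately show ?thesis by blast
qed

theorem proposition4p1:
  fixes bt :: 'a and S :: "'a set"
  assumes "bt \<notin> S"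
  shows "partial_order_on (Pstar bt S) (le_star_rel bt S)
    \<and> (\<exists>B\<in>Pstar bt S. \<forall>X\<in>Pstar bt S. le_star bt B X)
    \<and> (\<forall>C :: nat \<Rightarrow> 'a set. (\<forall>n. C n \<in> Pstar bt S) \<and> (\<forall>n. le_star bt (C n) (C (Suc n))) \<longrightarrow>
         (\<exists>U\<in>Pstar bt S. (\<forall>n. le_star bt (C n) U) \<and>
            (\<forall>V\<in>Pstar bt S. (\<forall>n. le_star bt (C n) V) \<longrightarrow> le_star bt U V)))"
proof (intro conjI allI impI)
  show "partial_order_on (Pstar bt S) (le_star_rel bt S)"
    by (rule partial_order_on_le_star_rel)
  show "\<exists>B\<in>Pstar bt S. \<forall>X\<in>Pstar bt S. le_star bt B X"
    by (intro bexI[of _ "{bt}"] ballI le_star_singleton_bot singleton_bot_in_Pstar)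
next
  fix C :: "nat \<Rightarrow> 'a set"
  assume "(\<forall>n. C n \<in> Pstar bt S) \<and> (\<forall>n. le_star bt (C n) (C (Suc n)))"
  then obtain U where "U \<in> Pstar bt S" and "le_star_lub bt C U"
    using le_star_chain_has_lub[of C bt S] by blast
  then show "\<exists>U\<in>Pstar bt S. (\<forall>n. le_star bt (C n) U) \<and>
      (\<forall>V\<in>Pstar bt S. (\<forall>n. le_star bt (C n) V) \<longrightarrow> le_star bt U V)"
    unfolding le_star_lub_def by blast
qed

end
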